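(* In the $K$-tier network model described in the context (common path-loss exponent $\alpha>2$, $W=0$), let tier $k$ use target SINR $\beta_k>0$ and rate $\mathcal R_k=\log_2(1+\beta_k)$, and define the transmission efficiency $$\mathcal F_T=\frac{\sum_{k=1}^K\lambda_k\mathcal A_k(1-\mathcal O_k^{int})\mathcal R_k}{\sum_{k=1}^K\lambda_k\mathcal A_k\big(\frac1\eta P_k+M_kP_C\big)}$$ with constants $\eta\in(0,1]$ and $P_C>0$. Regarded as a function of the access threshold $\epsilon$, as $\epsilon\to\infty$, $$\mathcal F_T\to\frac{\sum_{k=1}^K\lambda_k\Omega_k^\delta\mathcal R_k}{\sum_{k=1}^K\lambda_k\Omega_k^\delta\big(\frac1\eta P_k+M_kP_C\big)}.$$
   Context: Network model: $\mathcal K=\{1,\dots,K\}$. In $\mathbb R^2$, tier-$k$ BSs form a homogeneous PPP of intensity $\lambda_k>0$ and users a homogeneous PPP of intensity $\lambda_u>0$, all independent. Tier-$k$ BSs have transmit power $P_k>0$, $M_k\in\mathbb N$ antennas, bias $B_k>0$; common path-loss exponent $\alpha>2$, $\delta=2/\alpha$. $\Omega_k=P_kM_kB_k$, $\Omega_{j,k}=\Omega_j/\Omega_k$, $\Lambda=\sum_j\lambda_j\Omega_j^\delta$. Access threshold $\epsilon>0$, $R_k=(\Omega_k/\epsilon)^{1/\alpha}$. Association: with $D_k$ the distance from a typical user to its nearest tier-$k$ BS, $\hat\rho_k=\Omega_kD_k^{-\alpha}$ if $D_k\le R_k$, else $0$; association with tier $k$ iff $\hat\rho_k>\hat\rho_j$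 for all $j\ne k$, with probability $\mathcal T_k=\frac{\lambda_k\Omega_k^\delta}{\Lambda}(1-e^{-\pi\Lambda\epsilon^{-\delta}})$. Activation probability of tier $j$: $\mathcal A_j=1-\exp\big(-\frac{\lambda_u\Omega_j^\delta}{\Lambda}(1-e^{-\pi\Lambda\epsilon^{-\delta}})\big)$; active tier-$j$ BSs are modeled as a homogeneous PPP of intensity $\mathcal A_j\lambda_j$. Outage model: conditional on association with tier $k$, the serving distance $X_k$ has density $\frac{2\pi\lambda_k}{\mathcal T_k}x\exp(-\pi\frac{\Lambda}{\Omega_k^\delta}x^{2})$ on $(0,R_k]$; given $X_k$, interferers of tier $j$ are the points of independent homogeneous PPPs of intensity $\mathcal A_j\lambda_j$ outside the disk around the user of radius $\Omega_{j,k}^{1/\alpha}X_k$; $\|\mathbf h\|^2\sim\mathrm{Gamma}(M_k,1)$, an interferer of tier $j$ at distance $r$ contributes $P_jVr^{-\alpha}$ with $V\sim\mathrm{Exp}(1)$, all independent; $I_o$ is the total interference and $\mathcal O_k^{int}=\mathbb P\{P_k\|\mathbf h\|^2X_k^{-\alpha}/I_o<\beta_k\}$. $P_C$ is per-antenna circuit power, $\eta$ amplifier efficiency. *)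

theory Defs
  imports "HOL-Probability.Probability"
begin

text \<open>K-tier network; tiers are indexed by 1..K. delta = 2/alpha.\<close>

definition Omega :: "(nat \<Rightarrow> real) \<Rightarrow> (nat \<Rightarrow> nat) \<Rightarrow> (nat \<Rightarrow> real) \<Rightarrow> nat \<Rightarrow> real" where
  "Omega P M B k = P k * real (M k) * B k"

definition Lambda :: "nat \<Rightarrow> (nat \<Rightarrow> real) \<Rightarrow> (nat \<Rightarrow> real) \<Rightarrow> real \<Rightarrow> real" where
  "Lambda K lam Om alpha = (\<Sum>j\<in>{1..K}. lam j * Om j powr (2 / alpha))"

definition assoc_prob :: "nat \<Rightarrow> (nat \<Rightarrow> real) \<Rightarrow> (nat \<Rightarrow> real) \<Rightarrow> real \<Rightarrow> real \<Rightarrow> nat \<Rightarrow> real" where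
  "assoc_prob K lam Om alpha eps k =
     lam k * Om k powr (2 / alpha) / Lambda K lam Om alpha
     * (1 - exp (- pi * Lambda K lam Om alpha * eps powr (- (2 / alpha))))"

definition act_prob :: "nat \<Rightarrow> (nat \<Rightarrow> real) \<Rightarrow> real \<Rightarrow> (nat \<Rightarrow> real) \<Rightarrow> real \<Rightarrow> real \<Rightarrow> nat \<Rightarrow> real" where
  "act_prob K lam lam_u Om alpha eps j =
     1 - exp (- (lam_u * Om j powr (2 / alpha) / Lambda K lam Om alpha)
              * (1 - exp (- pi * Lambda K lam Om alpha * eps powr (- (2 / alpha)))))"

definition acc_radius :: "(nat \<Rightarrow> real) \<Rightarrow> real \<Rightarrow> real \<Rightarrow> nat \<Rightarrow> real" where
  "acc_radius Om alpha eps k = (Om k / eps) powr (1 / alpha)"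

text \<open>Density of the serving distance X_k conditional on association with tier k.\<close>
definition serve_density :: "nat \<Rightarrow> (nat \<Rightarrow> real) \<Rightarrow> (nat \<Rightarrow> real) \<Rightarrow> real \<Rightarrow> real \<Rightarrow> nat \<Rightarrow> real \<Rightarrow> real" where
  "serve_density K lam Om alpha eps k x =
     2 * pi * lam k / assoc_prob K lam Om alpha eps k * x
     * exp (- pi * Lambda K lam Om alpha / Om k powr (2 / alpha) * x\<^sup>2)"

text \<open>Laplace functional of the interference I_o given X_k = x: probability generating
  functional of the independent homogeneous PPPs (intensity A_j lam_j) of tier-j
  interferers outside the disk of radius Omega_{j,k}^{1/alpha} x, with i.i.d. Exp(1) marks V
  and contributions P_j V r^{-alpha}.\<close>
definition interf_laplace ::
  "nat \<Rightarrow> (nat \<Rightarrow> real) \<Rightarrow> real \<Rightarrow> (nat \<Rightarrow> real) \<Rightarrow> (nat \<Rightarrow> real) \<Rightarrow> real \<Rightarrow> real \<Rightarrow> nat \<Rightarrow> real \<Rightarrow> real \<Rightarrow> real" where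
  "interf_laplace K lam lam_u P Om alpha eps k x s =
     exp (- (\<Sum>j\<in>{1..K}. act_prob K lam lam_u Om alpha eps j * lam j *
        (LINT y : {y :: real \<times> real. norm y > (Om j / Om k) powr (1 / alpha) * x} | lborel.
           (1 - (LINT v | lborel. exponential_density 1 v * exp (- s * P j * v * norm y powr (- alpha)))))))"

text \<open>mu is the law of the total interference I_o given X_k = x: a probability law on the
  nonnegative reals whose Laplace transform is the PPP shot-noise Laplace functional
  (this determines the law uniquely).\<close>
definition is_interf_law ::
  "real measure \<Rightarrow> nat \<Rightarrow> (nat \<Rightarrow> real) \<Rightarrow> real \<Rightarrow> (nat \<Rightarrow> real) \<Rightarrow> (nat \<Rightarrow> real) \<Rightarrow> real \<Rightarrow> real \<Rightarrow> nat \<Rightarrow> real \<Rightarrow> bool" where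
  "is_interf_law mu K lam lam_u P Om alpha eps k x \<longleftrightarrow>
     prob_space mu \<and> sets mu = sets borel \<and> (AE i in mu. 0 \<le> i) \<and>
     (\<forall>s\<ge>0. (\<integral>i. exp (- s * i) \<partial>mu) = interf_laplace K lam lam_u P Om alpha eps k x s)"

text \<open>Outage probability O_k^int = P{ P_k |h|^2 X_k^{-alpha} / I_o < beta_k } with
  |h|^2 ~ Gamma(M_k,1) (= Erlang with shape M_k, rate 1), independent of X_k and I_o;
  equivalently the event |h|^2 < beta_k X_k^alpha I_o / P_k.
  mu x is the law of I_o given X_k = x.\<close>
definition outage ::
  "nat \<Rightarrow> (nat \<Rightarrow> real) \<Rightarrow> (nat \<Rightarrow> real) \<Rightarrow> (nat \<Rightarrow> nat) \<Rightarrow> (nat \<Rightarrow> real) \<Rightarrow> real \<Rightarrow> (nat \<Rightarrow> real)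
   \<Rightarrow> real \<Rightarrow> nat \<Rightarrow> (real \<Rightarrow> real measure) \<Rightarrow> real" where
  "outage K lam P M Om alpha beta eps k mu =
     (LINT x : {0<..acc_radius Om alpha eps k} | lborel.
        serve_density K lam Om alpha eps k x *
        (\<integral>i. measure (density lborel (erlang_density (M k - 1) 1))
               {..< beta k * x powr alpha * i / P k} \<partial>(mu x)))"

definition trans_eff ::
  "nat \<Rightarrow> (nat \<Rightarrow> real) \<Rightarrow> real \<Rightarrow> (nat \<Rightarrow> real) \<Rightarrow> (nat \<Rightarrow> nat) \<Rightarrow> (nat \<Rightarrow> real) \<Rightarrow> real
   \<Rightarrow> (nat \<Rightarrow> real) \<Rightarrow> real \<Rightarrow> real \<Rightarrow> (real \<Rightarrow> nat \<Rightarrow> real \<Rightarrow> real measure) \<Rightarrow> real \<Rightarrow> real" where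
  "trans_eff K lam lam_u P M B alpha beta eta PC mu eps =
     (let Om = Omega P M B in
      (\<Sum>k\<in>{1..K}. lam k * act_prob K lam lam_u Om alpha eps k
          * (1 - outage K lam P M Om alpha beta eps k (mu eps k)) * log 2 (1 + beta k))
      / (\<Sum>k\<in>{1..K}. lam k * act_prob K lam lam_u Om alpha eps k * (P k / eta + real (M k) * PC)))"

end

theory Submission
  imports Defs "HOL-Real_Asymp.Real_Asymp"
begin

text \<open>
  As eps tends to infinity, all activation probabilities A_j and association probabilities T_k
  vanish at the common rate of the coverage probability 1 - exp (-pi Lambda eps^(-delta)), and
  A_j divided by it tends to lam_u Omega_j^delta / Lambda. Dividing numerator and denominator
  of F_T by the coverage probability reduces the claim to the outage probabilities tending to 0.

  Given X_k = x, the Gamma(M_k, 1) CDF lies below the Exp(1) CDF, so the conditional outage is at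
  most 1 - L(s) <= -ln L(s), where L is the Laplace transform of the interference and
  s = beta_k x^alpha / P_k. By 1 - E exp (-b V) <= b, every tier's contribution to -ln L(s) is
  at most a constant times A_j, uniformly in x <= Omega_k^(1/alpha), because min 1 |y|^(-alpha)
  is integrable on the plane for alpha > 2. The serving-distance density is at most
  2 pi lam_k R_k / T_k on (0, R_k], so the outage is O(R_k^2 * sum_j A_j / T_k), which tends to 0
  since R_k^2 ~ eps^(-delta) while A_j / T_k stays bounded.
\<close>

lemma one_minus_exponential_laplace_le:
  fixes b :: real
  assumes "b \<ge> 0"
  shows "1 - (LINT v | lborel. exponential_density 1 v * exp (- (b * v))) \<le> b"
proof -
  have mass: "has_bochner_integral lborel (exponential_density 1) 1"
    using nn_integral_erlang_ith_moment[of 1 0 0]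
    by (intro has_bochner_integral_nn_integral) auto
  have mean: "has_bochner_integral lborel (\<lambda>v. exponential_density 1 v * v) 1"
    using nn_integral_erlang_ith_moment[of 1 0 1]
    by (intro has_bochner_integral_nn_integral) (auto simp: exponential_density_def)
  have lower: "has_bochner_integral lborel (\<lambda>v. exponential_density 1 v * (1 - b * v)) (1 - b)"
    using has_bochner_integral_diff[OF mass has_bochner_integral_mult_right[OF mean, of b]]
    by (simp add: algebra_simps)
  have "integrable lborel (\<lambda>v. exponential_density 1 v * exp (- (b * v)))"
  proof (rule Bochner_Integration.integrable_bound)
    show "integrable lborel (exponential_density 1)"
      using mass by (rule integrable.intros)
    show "AE v in lborel. norm (exponential_density 1 v * exp (- (b * v))) \<le> norm (exponential_density 1 v)"
      using assms by (auto simp: exponential_density_def abs_mult)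
  qed simp
  then have "(LINT v | lborel. exponential_density 1 v * (1 - b * v))
      \<le> (LINT v | lborel. exponential_density 1 v * exp (- (b * v)))"
  proof (rule integral_mono[OF integrable.intros[OF lower]])
    fix v :: real
    show "exponential_density 1 v * (1 - b * v) \<le> exponential_density 1 v * exp (- (b * v))"
      using exp_ge_add_one_self[of "- (b * v)"]
      by (intro mult_left_mono) (auto simp: exponential_density_def)
  qed
  then show ?thesis
    using has_bochner_integral_integral_eq[OF lower] by simp
qed

lemma measure_erlang_lessThan_le:
  fixes t :: real
  assumes "t \<ge> 0"
  shows "measure (density lborel (erlang_density k 1)) {..<t} \<le> 1 - exp (- t)"
proof -
  interpret erlang: prob_space "density lborel (erlang_density k 1)"
    by (rule prob_space_erlang_density) simp
  have "measure (density lborel (erlang_density k 1)) {..<t}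
      \<le> measure (density lborel (erlang_density k 1)) {..t}"
    by (intro erlang.finite_measure_mono) auto
  also have "\<dots> = erlang_CDF k 1 t"
    using emeasure_erlang_density[of 1 k t] erlang_CDF_nonneg[of 1 k t]
    by (simp add: measure_def)
  also have "\<dots> \<le> 1 - exp (- t)"
  proof -
    have "exp (- t) \<le> (\<Sum>n\<le>k. t ^ n * exp (- t) / fact n)"
      using assms by (subst sum.atMost_shift) (auto intro!: sum_nonneg)
    then show ?thesis
      using assms by (simp add: erlang_CDF_def)
  qed
  finally show ?thesis .
qed

lemma integral_erlang_lessThan_le_one_minus_laplace:
  fixes mu :: "real measure" and s :: real
  assumes "prob_space mu" "sets mu = sets borel" "AE i in mu. 0 \<le> i" "s \<ge> 0"
  shows "(\<integral>i. measure (density lborel (erlang_density m 1)) {..< s * i} \<partial>mu)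
    \<le> 1 - (\<integral>i. exp (- s * i) \<partial>mu)"
proof -
  interpret prob_space mu by fact
  have meas: "f \<in> borel_measurable mu" if "f \<in> borel_measurable borel" for f :: "real \<Rightarrow> real"
    using that measurable_cong_sets[OF assms(2) refl] by blast
  interpret erlang: prob_space "density lborel (erlang_density m 1)"
    by (rule prob_space_erlang_density) simp
  have "mono (\<lambda>t. erlang.prob {..< t})"
    by (intro monoI erlang.finite_measure_mono) auto
  then have cdf: "(\<lambda>i. measure (density lborel (erlang_density m 1)) {..< s * i}) \<in> borel_measurable mu"
    by (intro meas) (rule measurable_compose[OF _ borel_measurable_mono], simp_all)
  have "integrable mu (\<lambda>i. erlang.prob {..< s * i})"
    by (rule integrable_const_bound[where B = 1]) (simp_all add: cdf)
  moreover have exp_integrable: "integrable mu (\<lambda>i. exp (- s * i))"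
  proof (rule integrable_const_bound[where B = 1])
    show "AE i in mu. norm (exp (- s * i)) \<le> 1"
      using assms(3) by eventually_elim (use assms(4) in simp)
  qed (intro meas, simp)
  moreover have "AE i in mu. erlang.prob {..< s * i} \<le> 1 - exp (- s * i)"
    using assms(3) by eventually_elim (use assms(4) in \<open>simp add: measure_erlang_lessThan_le\<close>)
  ultimately have "(\<integral>i. erlang.prob {..< s * i} \<partial>mu) \<le> (\<integral>i. 1 - exp (- s * i) \<partial>mu)"
    by (intro integral_mono_AE) simp_all
  also have "\<dots> = 1 - (\<integral>i. exp (- s * i) \<partial>mu)"
    using exp_integrable by (simp add: prob_space)
  finally show ?thesis .
qed

lemma integrable_one_plus_abs_powr:
  fixes q :: real
  assumes "q > 1"
  shows "integrable lborel (\<lambda>t::real. (1 + \<bar>t\<bar>) powr - q)"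
proof -
  define f where "f = (\<lambda>t::real. indicator {1..} t * t powr - q)"
  have "(\<lambda>t. t powr - q) absolutely_integrable_on {1..}"
    using has_integral_powr_to_inf[of "- q" 1] assms
    by (intro nonnegative_absolutely_integrable_1) (auto simp: integrable_on_def)
  then have "integrable lebesgue f"
    by (simp add: f_def set_integrable_def mult.commute)
  then have "integrable lborel f"
    by (subst (asm) integrable_completion) (auto simp: f_def)
  then have "integrable lborel (\<lambda>t. f (1 + 1 * t))" "integrable lborel (\<lambda>t. f (1 + (- 1) * t))"
    by (subst lborel_integrable_real_affine_iff; simp)+
  then show ?thesis
    by (rule Bochner_Integration.integrable_bound[OF Bochner_Integration.integrable_add])
       (auto simp: f_def indicator_def)
qed

lemma (in pair_sigma_finite) integrable_mult_fst_snd: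
  fixes f g :: "_ \<Rightarrow> real"
  assumes "integrable M1 f" "integrable M2 g"
  shows "integrable (M1 \<Otimes>\<^sub>M M2) (\<lambda>y. f (fst y) * g (snd y))"
proof (rule Fubini_integrable)
  show "(\<lambda>y. f (fst y) * g (snd y)) \<in> borel_measurable (M1 \<Otimes>\<^sub>M M2)"
    using assms by measurable
  show "integrable M1 (\<lambda>x. \<integral>y. norm (f (fst (x, y)) * g (snd (x, y))) \<partial>M2)"
    using assms by (simp add: abs_mult)
  show "AE x in M1. integrable M2 (\<lambda>y. f (fst (x, y)) * g (snd (x, y)))"
    using assms by simp
qed

lemma min_one_norm_powr_le:
  fixes y :: "real \<times> real" and alpha :: real
  assumes "alpha > 0"
  shows "min 1 (norm y powr - alpha)
    \<le> 2 powr alpha * ((1 + \<bar>fst y\<bar>) powr - (alpha / 2) * (1 + \<bar>snd y\<bar>) powr - (alpha / 2))"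
proof -
  define n where "n = norm y"
  have "n \<ge> 0" "\<bar>fst y\<bar> \<le> n" "\<bar>snd y\<bar> \<le> n"
    by (cases y; simp add: n_def norm_Pair)+
  have "min 1 (n powr - alpha) \<le> (2 / (1 + n)) powr alpha"
  proof (cases "n \<le> 1")
    case True
    then show ?thesis
      using \<open>n \<ge> 0\<close> assms by (auto intro!: ge_one_powr_ge_zero simp: field_simps min_le_iff_disj)
  next
    case False
    then have "n powr - alpha = (1 / n) powr alpha"
      by (simp add: powr_minus_divide powr_divide)
    also have "\<dots> \<le> (2 / (1 + n)) powr alpha"
      using False assms by (intro powr_mono2) (auto simp: field_simps)
    finally show ?thesis
      by linarith
  qed
  also have "\<dots> = 2 powr alpha * ((1 + n) * (1 + n)) powr - (alpha / 2)"
    using \<open>n \<ge> 0\<close> by (simp add: powr_divide powr_mult powr_minus_divide flip: powr_add)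
  also have "\<dots> \<le> 2 powr alpha * ((1 + \<bar>fst y\<bar>) * (1 + \<bar>snd y\<bar>)) powr - (alpha / 2)"
    using \<open>\<bar>fst y\<bar> \<le> n\<close> \<open>\<bar>snd y\<bar> \<le> n\<close> assms
    by (intro mult_left_mono powr_mono2' mult_mono) auto
  finally show ?thesis
    by (simp add: n_def powr_mult)
qed

lemma integrable_min_one_norm_powr:
  fixes alpha :: real
  assumes "alpha > 2"
  shows "integrable lborel (\<lambda>y::real \<times> real. min 1 (norm y powr - alpha))"
proof (rule Bochner_Integration.integrable_bound)
  let ?g = "\<lambda>t::real. (1 + \<bar>t\<bar>) powr - (alpha / 2)"
  have "integrable (lborel \<Otimes>\<^sub>M lborel) (\<lambda>y. ?g (fst y) * ?g (snd y))"
    using assms by (intro pair_sigma_finite.integrable_mult_fst_snd integrable_one_plus_abs_powr)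
      (auto simp: pair_sigma_finite_def lborel.sigma_finite_measure_axioms)
  then show "integrable lborel (\<lambda>y::real \<times> real. 2 powr alpha * (?g (fst y) * ?g (snd y)))"
    by (simp add: lborel_prod)
  show "AE y in lborel. norm (min 1 (norm y powr - alpha)) \<le> norm (2 powr alpha * (?g (fst y) * ?g (snd y)))"
  proof (rule AE_I2)
    fix y :: "real \<times> real"
    show "norm (min 1 (norm y powr - alpha)) \<le> norm (2 powr alpha * (?g (fst y) * ?g (snd y)))"
      using min_one_norm_powr_le[of alpha y] assms by simp
  qed
  show "(\<lambda>y::real \<times> real. min 1 (norm y powr - alpha)) \<in> borel_measurable lborel"
    by (simp add: borel_measurable_min powr_real_measurable)
qed

lemma set_integral_le_integral_of_bound:
  fixes f g :: "'a \<Rightarrow> real"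
  assumes "integrable M g" "\<And>x. 0 \<le> g x" "\<And>x. x \<in> A \<Longrightarrow> f x \<le> g x"
  shows "(LINT x:A|M. f x) \<le> integral\<^sup>L M g"
proof (cases "set_integrable M A f")
  case True
  then show ?thesis
    unfolding set_lebesgue_integral_def set_integrable_def
    using assms by (intro integral_mono) (auto simp: indicator_def)
next
  case False
  then show ?thesis
    using assms(2) by (simp add: set_lebesgue_integral_def set_integrable_def
        not_integrable_integral_eq integral_nonneg)
qed

lemma shot_noise_integral_le:
  fixes r s p alpha :: real
  assumes "alpha > 2" "r > 0" "s \<ge> 0" "p \<ge> 0"
  shows "(LINT y : {y :: real \<times> real. norm y > r} | lborel.
           1 - (LINT v | lborel. exponential_density 1 v * exp (- s * p * v * norm y powr (- alpha))))
    \<le> s * p * (r powr (- alpha) + 1) * (LINT y | lborel. min 1 (norm (y :: real \<times> real) powr (- alpha)))"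
proof -
  have pointwise: "1 - (LINT v | lborel. exponential_density 1 v * exp (- s * p * v * norm y powr (- alpha)))
      \<le> s * p * (r powr (- alpha) + 1) * min 1 (norm y powr (- alpha))"
    if "norm y > r" for y :: "real \<times> real"
  proof -
    have gap: "1 - (LINT v | lborel. exponential_density 1 v * exp (- s * p * v * norm y powr (- alpha)))
        \<le> s * p * norm y powr (- alpha)"
      using one_minus_exponential_laplace_le[of "s * p * norm y powr (- alpha)"] assms
      by (simp add: mult_ac)
    have "norm y powr (- alpha) \<le> (r powr (- alpha) + 1) * min 1 (norm y powr (- alpha))"
    proof (cases "norm y \<le> 1")
      case True
      have "norm y powr (- alpha) \<le> r powr (- alpha)"
        using that assms by (intro powr_mono2') auto
      moreover have "1 \<le> norm y powr (- alpha)"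
        using True that assms by (auto simp: powr_minus one_le_inverse_iff intro: powr_le1)
      ultimately show ?thesis
        by simp
    next
      case False
      then have "norm y powr (- alpha) \<le> 1"
        using ge_one_powr_ge_zero[of "norm y" alpha] False assms by (simp add: powr_minus inverse_le_1_iff)
      then show ?thesis
        by (simp add: ring_distribs)
    qed
    then have "s * p * norm y powr (- alpha) \<le> s * p * ((r powr (- alpha) + 1) * min 1 (norm y powr (- alpha)))"
      using assms by (intro mult_left_mono) auto
    with gap show ?thesis
      by (simp only: mult.assoc)
  qed
  have "(LINT y : {y :: real \<times> real. norm y > r} | lborel.
           1 - (LINT v | lborel. exponential_density 1 v * exp (- s * p * v * norm y powr (- alpha))))
    \<le> (LINT y | lborel. s * p * (r powr (- alpha) + 1) * min 1 (norm (y :: real \<times> real) powr (- alpha)))"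
  proof (rule set_integral_le_integral_of_bound)
    show "integrable lborel
        (\<lambda>y :: real \<times> real. s * p * (r powr (- alpha) + 1) * min 1 (norm y powr (- alpha)))"
      using assms integrable_min_one_norm_powr[of alpha] by simp
  qed (use assms pointwise in auto)
  then show ?thesis
    by simp
qed

lemma tendsto_weighted_ratio:
  fixes A u :: "'a \<Rightarrow> 'i \<Rightarrow> real" and w :: "'a \<Rightarrow> real"
  assumes "finite I"
    and A: "\<And>k. k \<in> I \<Longrightarrow> ((\<lambda>x. A x k / w x) \<longlongrightarrow> c * a k) F"
    and u: "\<And>k. k \<in> I \<Longrightarrow> ((\<lambda>x. u x k) \<longlongrightarrow> 0) F"
    and w: "eventually (\<lambda>x. w x \<noteq> 0) F" and "c \<noteq> 0" and "(\<Sum>k\<in>I. a k * q k) \<noteq> 0"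
  shows "((\<lambda>x. (\<Sum>k\<in>I. A x k * (1 - u x k) * r k) / (\<Sum>k\<in>I. A x k * q k))
    \<longlongrightarrow> (\<Sum>k\<in>I. a k * r k) / (\<Sum>k\<in>I. a k * q k)) F"
proof -
  have "((\<lambda>x. (\<Sum>k\<in>I. A x k / w x * (1 - u x k) * r k) / (\<Sum>k\<in>I. A x k / w x * q k))
      \<longlongrightarrow> (\<Sum>k\<in>I. c * a k * (1 - 0) * r k) / (\<Sum>k\<in>I. c * a k * q k)) F"
    using assms by (intro tendsto_intros) (auto simp flip: sum_distrib_left simp: mult.assoc)
  moreover have "eventually (\<lambda>x.
        (\<Sum>k\<in>I. A x k / w x * (1 - u x k) * r k) / (\<Sum>k\<in>I. A x k / w x * q k)
      = (\<Sum>k\<in>I. A x k * (1 - u x k) * r k) / (\<Sum>k\<in>I. A x k * q k)) F"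
    using w by eventually_elim (simp add: sum_divide_distrib [symmetric] mult.assoc)
  ultimately show ?thesis
    using \<open>c \<noteq> 0\<close> by (simp add: tendsto_cong mult.assoc flip: sum_distrib_left)
qed

text \<open>The probability that the typical user is associated with some tier, i.e. the sum of the
  association probabilities \<open>T\<^sub>k\<close>.\<close>

definition coverage_prob ::
  "nat \<Rightarrow> (nat \<Rightarrow> real) \<Rightarrow> (nat \<Rightarrow> real) \<Rightarrow> real \<Rightarrow> real \<Rightarrow> real" where
  "coverage_prob K lam Om alpha eps = 1 - exp (- pi * Lambda K lam Om alpha * eps powr (- (2 / alpha)))"

lemma assoc_prob_eq_coverage_prob:
  "assoc_prob K lam Om alpha eps k
    = lam k * Om k powr (2 / alpha) / Lambda K lam Om alpha * coverage_prob K lam Om alpha eps"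
  by (simp add: assoc_prob_def coverage_prob_def)

lemma act_prob_eq_coverage_prob:
  "act_prob K lam lam_u Om alpha eps j
    = 1 - exp (- (lam_u * Om j powr (2 / alpha) / Lambda K lam Om alpha) * coverage_prob K lam Om alpha eps)"
  by (simp add: act_prob_def coverage_prob_def)

locale tiered_network =
  fixes K :: nat and lam :: "nat \<Rightarrow> real" and lam_u :: real and P Om :: "nat \<Rightarrow> real"
    and alpha :: real
  assumes lam_pos: "j \<in> {1..K} \<Longrightarrow> lam j > 0"
    and P_pos: "j \<in> {1..K} \<Longrightarrow> P j > 0"
    and Om_pos: "j \<in> {1..K} \<Longrightarrow> Om j > 0"
    and lam_u_pos: "lam_u > 0"
    and alpha_gt_2: "alpha > 2"
begin

lemma tier_weight_pos:
  assumes "j \<in> {1..K}"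
  shows "lam j * Om j powr (2 / alpha) > 0"
  using lam_pos[OF assms] Om_pos[OF assms] by simp

lemma Lambda_nonneg: "Lambda K lam Om alpha \<ge> 0"
  unfolding Lambda_def by (intro sum_nonneg less_imp_le tier_weight_pos)

lemma Lambda_pos: "K \<noteq> 0 \<Longrightarrow> Lambda K lam Om alpha > 0"
  unfolding Lambda_def by (intro sum_pos tier_weight_pos) auto

lemma tier_weighted_sum_pos:
  assumes "K \<noteq> 0" "\<And>k. k \<in> {1..K} \<Longrightarrow> q k > 0"
  shows "(\<Sum>k\<in>{1..K}. lam k * Om k powr (2 / alpha) * q k) > 0"
  using assms(1) by (intro sum_pos mult_pos_pos[OF tier_weight_pos] assms(2)) auto

lemma coverage_prob_nonneg: "coverage_prob K lam Om alpha eps \<ge> 0"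
  using Lambda_nonneg by (simp add: coverage_prob_def)

lemma coverage_prob_pos: "K \<noteq> 0 \<Longrightarrow> eps > 0 \<Longrightarrow> coverage_prob K lam Om alpha eps > 0"
  using Lambda_pos by (simp add: coverage_prob_def)

lemma act_prob_nonneg: "act_prob K lam lam_u Om alpha eps j \<ge> 0"
  using lam_u_pos Lambda_nonneg coverage_prob_nonneg[of eps]
  by (simp add: act_prob_eq_coverage_prob)

lemma assoc_prob_nonneg: "k \<in> {1..K} \<Longrightarrow> assoc_prob K lam Om alpha eps k \<ge> 0"
  using tier_weight_pos[of k] Lambda_nonneg coverage_prob_nonneg[of eps]
  by (simp add: assoc_prob_eq_coverage_prob)

lemma act_prob_div_coverage_prob_tendsto:
  assumes "K \<noteq> 0"
  shows "((\<lambda>eps. act_prob K lam lam_u Om alpha eps j / coverage_prob K lam Om alpha eps)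
    \<longlongrightarrow> lam_u * Om j powr (2 / alpha) / Lambda K lam Om alpha) at_top"
proof -
  define L where "L = Lambda K lam Om alpha"
  define c where "c = lam_u * Om j powr (2 / alpha) / L"
  have "L > 0" "c \<ge> 0"
    using Lambda_pos[OF assms] lam_u_pos by (simp_all add: L_def c_def)
  then have "((\<lambda>e. (1 - exp (- c * (1 - exp (- pi * L * e powr (- (2 / alpha))))))
      / (1 - exp (- pi * L * e powr (- (2 / alpha))))) \<longlongrightarrow> c) at_top"
    using alpha_gt_2 by (real_asymp simp add: field_simps)
  then show ?thesis
    by (simp add: act_prob_eq_coverage_prob coverage_prob_def L_def c_def)
qed

lemma acc_radius_sq_act_prob_div_assoc_prob_tendsto:
  assumes "k \<in> {1..K}" "j \<in> {1..K}"
  shows "((\<lambda>eps. acc_radius Om alpha eps k ^ 2 * act_prob K lam lam_u Om alpha eps j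
      / assoc_prob K lam Om alpha eps k) \<longlongrightarrow> 0) at_top"
proof -
  define L where "L = Lambda K lam Om alpha"
  define c where "c = lam_u * Om j powr (2 / alpha) / L"
  define a where "a = lam k * Om k powr (2 / alpha) / L"
  define b where "b = Om k"
  have "L > 0" "c > 0" "a > 0" "b > 0"
    using assms Lambda_pos lam_u_pos tier_weight_pos[OF assms(1)] Om_pos[OF assms(1)] Om_pos[OF assms(2)]
    by (auto simp: L_def c_def a_def b_def)
  then have "((\<lambda>e. (b / e) powr (1 / alpha) * (b / e) powr (1 / alpha)
        * (1 - exp (- c * (1 - exp (- pi * L * e powr (- (2 / alpha))))))
      / (a * (1 - exp (- pi * L * e powr (- (2 / alpha)))))) \<longlongrightarrow> 0) at_top"
    using alpha_gt_2 by real_asymp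
  then show ?thesis
    by (simp add: act_prob_eq_coverage_prob assoc_prob_eq_coverage_prob coverage_prob_def
        acc_radius_def L_def c_def a_def b_def power2_eq_square)
qed

text \<open>Bounds \<open>- ln\<close> of the Laplace transform of the interference at
  \<open>s = beta k * x powr alpha / P k\<close>, uniformly in \<open>x powr alpha \<le> Om k\<close>.\<close>

definition interference_exponent_bound :: "(nat \<Rightarrow> real) \<Rightarrow> real \<Rightarrow> nat \<Rightarrow> real" where
  "interference_exponent_bound beta eps k =
     (\<Sum>j\<in>{1..K}. act_prob K lam lam_u Om alpha eps j * lam j
         * (beta k * P j / P k * (Om k / Om j + Om k)
            * (LINT y | lborel. min 1 (norm (y :: real \<times> real) powr (- alpha)))))"

lemma interference_exponent_bound_nonneg:
  assumes "k \<in> {1..K}" "beta k \<ge> 0"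
  shows "interference_exponent_bound beta eps k \<ge> 0"
  unfolding interference_exponent_bound_def
proof (intro sum_nonneg)
  fix j
  assume j: "j \<in> {1..K}"
  have "(LINT y | lborel. min 1 (norm (y :: real \<times> real) powr (- alpha))) \<ge> 0"
    by (intro Bochner_Integration.integral_nonneg) simp
  with assms j act_prob_nonneg[of eps j] lam_pos[OF j] P_pos[OF j] P_pos[OF assms(1)]
    Om_pos[OF j] Om_pos[OF assms(1)]
  show "0 \<le> act_prob K lam lam_u Om alpha eps j * lam j * (beta k * P j / P k * (Om k / Om j + Om k)
      * (LINT y | lborel. min 1 (norm (y :: real \<times> real) powr (- alpha))))"
    by (auto intro!: mult_nonneg_nonneg)
qed

lemma serve_density_le:
  assumes "k \<in> {1..K}" "x \<ge> 0"
  shows "serve_density K lam Om alpha eps k x \<le> 2 * pi * lam k / assoc_prob K lam Om alpha eps k * x"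
proof -
  have "exp (- pi * Lambda K lam Om alpha / Om k powr (2 / alpha) * x\<^sup>2) \<le> 1"
    using Lambda_nonneg by simp
  moreover have "2 * pi * lam k / assoc_prob K lam Om alpha eps k \<ge> 0"
    using lam_pos[OF assms(1)] assoc_prob_nonneg[OF assms(1)] by simp
  ultimately show ?thesis
    unfolding serve_density_def using assms(2) by (intro mult_left_le mult_nonneg_nonneg)
qed

lemma powr_le_Om_if_le_acc_radius:
  assumes "k \<in> {1..K}" "eps \<ge> 1" "0 \<le> x" "x \<le> acc_radius Om alpha eps k"
  shows "x powr alpha \<le> Om k"
proof -
  have "x powr alpha \<le> acc_radius Om alpha eps k powr alpha"
    using assms(3,4) alpha_gt_2 by (intro powr_mono2) auto
  also have "\<dots> \<le> Om k"
    using Om_pos[OF assms(1)] assms(2) alpha_gt_2 by (simp add: acc_radius_def powr_powr divide_le_eq)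
  finally show ?thesis .
qed

lemma conditional_outage_le:
  assumes k: "k \<in> {1..K}" and beta: "beta k > 0"
    and x: "0 < x" "x powr alpha \<le> Om k"
    and law: "is_interf_law mu K lam lam_u P Om alpha eps k x"
  shows "(\<integral>i. measure (density lborel (erlang_density m 1)) {..< beta k * x powr alpha * i / P k} \<partial>mu)
    \<le> interference_exponent_bound beta eps k"
proof -
  define s where "s = beta k * x powr alpha / P k"
  define I where "I = (LINT y | lborel. min 1 (norm (y :: real \<times> real) powr (- alpha)))"
  define J where "J j = (LINT y : {y :: real \<times> real. norm y > (Om j / Om k) powr (1 / alpha) * x} | lborel.
      1 - (LINT v | lborel. exponential_density 1 v * exp (- s * P j * v * norm y powr (- alpha))))" for j
  have "s \<ge> 0"
    using beta P_pos[OF k] by (simp add: s_def)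
  define S where "S = (\<Sum>j\<in>{1..K}. act_prob K lam lam_u Om alpha eps j * lam j * J j)"
  have "I \<ge> 0"
    unfolding I_def by (intro Bochner_Integration.integral_nonneg) simp
  have J_le: "J j \<le> beta k * P j / P k * (Om k / Om j + Om k) * I" if j: "j \<in> {1..K}" for j
  proof -
    have "J j \<le> s * P j * (((Om j / Om k) powr (1 / alpha) * x) powr (- alpha) + 1) * I"
      unfolding J_def I_def
      using alpha_gt_2 \<open>s \<ge> 0\<close> x P_pos[OF j] Om_pos[OF j] Om_pos[OF k]
      by (intro shot_noise_integral_le) auto
    also have "s * P j * (((Om j / Om k) powr (1 / alpha) * x) powr (- alpha) + 1)
        = beta k * P j / P k * (Om k / Om j + x powr alpha)"
      using alpha_gt_2 x(1) Om_pos[OF j] Om_pos[OF k] P_pos[OF k]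
      by (simp add: s_def powr_mult powr_powr powr_minus field_simps)
    also have "\<dots> * I \<le> beta k * P j / P k * (Om k / Om j + Om k) * I"
      using beta x(2) P_pos[OF j] P_pos[OF k] \<open>I \<ge> 0\<close>
      by (intro mult_right_mono mult_left_mono) auto
    finally show ?thesis .
  qed
  have "(\<integral>i. measure (density lborel (erlang_density m 1)) {..< beta k * x powr alpha * i / P k} \<partial>mu)
      = (\<integral>i. measure (density lborel (erlang_density m 1)) {..< s * i} \<partial>mu)"
    by (simp add: s_def)
  also have "\<dots> \<le> 1 - (\<integral>i. exp (- s * i) \<partial>mu)"
    using law \<open>s \<ge> 0\<close> unfolding is_interf_law_def
    by (intro integral_erlang_lessThan_le_one_minus_laplace) auto
  also have "(\<integral>i. exp (- s * i) \<partial>mu) = exp (- S)"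
    using law \<open>s \<ge> 0\<close> by (simp add: is_interf_law_def interf_laplace_def J_def S_def)
  also have "1 - exp (- S) \<le> S"
    using exp_ge_add_one_self[of "- S"] by simp
  also have "S \<le> interference_exponent_bound beta eps k"
    unfolding S_def interference_exponent_bound_def I_def[symmetric]
    by (intro sum_mono mult_left_mono J_le mult_nonneg_nonneg act_prob_nonneg less_imp_le lam_pos)
  finally show ?thesis .
qed

lemma outage_nonneg:
  assumes "k \<in> {1..K}"
  shows "outage K lam P M Om alpha beta eps k mu \<ge> 0"
  unfolding outage_def set_lebesgue_integral_def
  using assoc_prob_nonneg[OF assms] lam_pos[OF assms]
  by (intro Bochner_Integration.integral_nonneg)
     (auto simp: serve_density_def indicator_def intro!: Bochner_Integration.integral_nonneg)

lemma outage_le: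
  assumes k: "k \<in> {1..K}" and beta: "beta k > 0" and eps: "eps \<ge> 1"
    and law: "\<forall>x\<in>{0<..acc_radius Om alpha eps k}. is_interf_law (mu x) K lam lam_u P Om alpha eps k x"
  shows "outage K lam P M Om alpha beta eps k mu
    \<le> 2 * pi * lam k / assoc_prob K lam Om alpha eps k * acc_radius Om alpha eps k ^ 2
       * interference_exponent_bound beta eps k"
    (is "_ \<le> ?c * ?R ^ 2 * ?E")
proof -
  have "?c \<ge> 0" "?R \<ge> 0" "?E \<ge> 0"
    using lam_pos[OF k] assoc_prob_nonneg[OF k] interference_exponent_bound_nonneg[OF k] beta
    by (simp_all add: acc_radius_def)
  then have "?c * ?R * ?E \<ge> 0"
    by (intro mult_nonneg_nonneg)
  have pointwise: "serve_density K lam Om alpha eps k x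
      * (\<integral>i. measure (density lborel (erlang_density (M k - 1) 1))
            {..< beta k * x powr alpha * i / P k} \<partial>mu x)
      \<le> ?c * ?R * ?E" if x: "x \<in> {0<..?R}" for x
  proof (rule mult_mono)
    have "?c * x \<le> ?c * ?R"
      using x \<open>?c \<ge> 0\<close> by (intro mult_left_mono) auto
    with x show "serve_density K lam Om alpha eps k x \<le> ?c * ?R"
      using serve_density_le[OF k, of x eps] by simp
    show "(\<integral>i. measure (density lborel (erlang_density (M k - 1) 1))
        {..< beta k * x powr alpha * i / P k} \<partial>mu x) \<le> ?E"
      using x law powr_le_Om_if_le_acc_radius[OF k eps, of x]
      by (intro conditional_outage_le[where beta = beta, OF k beta]) auto
    show "?c * ?R \<ge> 0"
      using \<open>?c \<ge> 0\<close> \<open>?R \<ge> 0\<close> by (rule mult_nonneg_nonneg)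
  qed (intro Bochner_Integration.integral_nonneg, simp)
  have "outage K lam P M Om alpha beta eps k mu \<le> (LINT x | lborel. indicator {0<..?R} x * (?c * ?R * ?E))"
    unfolding outage_def
  proof (rule set_integral_le_integral_of_bound)
    show "integrable lborel (\<lambda>x. indicator {0<..?R} x * (?c * ?R * ?E))"
      using \<open>?R \<ge> 0\<close> by (intro integrable_mult_left integrable_real_indicator) auto
    show "0 \<le> indicator {0<..?R} x * (?c * ?R * ?E)" for x
      by (rule mult_nonneg_nonneg[OF indicator_pos_le \<open>?c * ?R * ?E \<ge> 0\<close>])
  qed (use pointwise in simp)
  also have "\<dots> = ?c * ?R ^ 2 * ?E"
    using \<open>?R \<ge> 0\<close> by (simp add: power2_eq_square mult_ac)
  finally show ?thesis .
qed

lemma outage_tendsto_zero: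
  assumes k: "k \<in> {1..K}" and beta: "beta k > 0"
    and law: "\<forall>eps>0. \<forall>x\<in>{0<..acc_radius Om alpha eps k}.
      is_interf_law (mu eps x) K lam lam_u P Om alpha eps k x"
  shows "((\<lambda>eps. outage K lam P M Om alpha beta eps k (mu eps)) \<longlongrightarrow> 0) at_top"
proof (rule tendsto_sandwich[OF _ _ tendsto_const])
  define w where "w j = beta k * P j / P k * (Om k / Om j + Om k)
    * (LINT y | lborel. min 1 (norm (y :: real \<times> real) powr (- alpha)))" for j
  define bound where "bound eps = (\<Sum>j\<in>{1..K}. 2 * pi * lam k * lam j * w j
    * (acc_radius Om alpha eps k ^ 2 * act_prob K lam lam_u Om alpha eps j
       / assoc_prob K lam Om alpha eps k))" for eps
  show "\<forall>\<^sub>F eps in at_top. 0 \<le> outage K lam P M Om alpha beta eps k (mu eps)"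
    by (simp add: outage_nonneg[OF k])
  show "\<forall>\<^sub>F eps in at_top. outage K lam P M Om alpha beta eps k (mu eps) \<le> bound eps"
    using eventually_ge_at_top[of "1 :: real"]
  proof eventually_elim
    case (elim eps)
    then have "outage K lam P M Om alpha beta eps k (mu eps)
        \<le> 2 * pi * lam k / assoc_prob K lam Om alpha eps k * acc_radius Om alpha eps k ^ 2
          * interference_exponent_bound beta eps k"
      using law by (intro outage_le[where beta = beta, OF k beta]) auto
    also have "\<dots> = bound eps"
      by (simp add: bound_def interference_exponent_bound_def w_def sum_distrib_left
          sum_divide_distrib mult_ac)
    finally show ?case .
  qed
  show "(bound \<longlongrightarrow> 0) at_top"
    unfolding bound_def
    by (intro tendsto_null_sum tendsto_mult_right_zero acc_radius_sq_act_prob_div_assoc_prob_tendsto k)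
qed

end

lemma tiered_network_Omega:
  assumes "\<forall>k\<in>{1..K}. lam k > 0 \<and> P k > 0 \<and> M k \<ge> 1 \<and> B k > 0" "lam_u > 0" "alpha > 2"
  shows "tiered_network K lam lam_u P (Omega P M B) alpha"
proof
  fix j
  assume "j \<in> {1..K}"
  then have "lam j > 0" "P j > 0" "M j \<ge> 1" "B j > 0"
    using assms(1) by auto
  then show "lam j > 0" "P j > 0" "Omega P M B j > 0"
    by (simp_all add: Omega_def)
qed (use assms in auto)

theorem proposition3:
  fixes K :: nat and lam :: "nat \<Rightarrow> real" and lam_u :: real
    and P :: "nat \<Rightarrow> real" and M :: "nat \<Rightarrow> nat" and B :: "nat \<Rightarrow> real"
    and alpha eta PC :: real and beta :: "nat \<Rightarrow> real"
    and mu :: "real \<Rightarrow> nat \<Rightarrow> real \<Rightarrow> real measure"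
  assumes "\<forall>k\<in>{1..K}. lam k > 0 \<and> P k > 0 \<and> M k \<ge> 1 \<and> B k > 0 \<and> beta k > 0"
    and "lam_u > 0" and "alpha > 2" and "0 < eta" and "eta \<le> 1" and "PC > 0"
    and "\<forall>eps>0. \<forall>k\<in>{1..K}. \<forall>x\<in>{0<..acc_radius (Omega P M B) alpha eps k}.
           is_interf_law (mu eps k x) K lam lam_u P (Omega P M B) alpha eps k x"
  shows "((\<lambda>eps. trans_eff K lam lam_u P M B alpha beta eta PC mu eps) \<longlongrightarrow>
           (\<Sum>k\<in>{1..K}. lam k * Omega P M B k powr (2 / alpha) * log 2 (1 + beta k))
           / (\<Sum>k\<in>{1..K}. lam k * Omega P M B k powr (2 / alpha) * (P k / eta + real (M k) * PC)))
         at_top"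
proof (cases "K = 0")
  case True
  then show ?thesis
    by (simp add: trans_eff_def)
next
  case False
  interpret tiered_network K lam lam_u P "Omega P M B" alpha
    using assms(1-3) by (intro tiered_network_Omega) auto
  show ?thesis
    unfolding trans_eff_def Let_def
  proof (rule tendsto_weighted_ratio)
    show "((\<lambda>eps. lam k * act_prob K lam lam_u (Omega P M B) alpha eps k
          / coverage_prob K lam (Omega P M B) alpha eps)
        \<longlongrightarrow> lam_u / Lambda K lam (Omega P M B) alpha * (lam k * Omega P M B k powr (2 / alpha)))
        at_top" for k
      using tendsto_mult_left[OF act_prob_div_coverage_prob_tendsto[OF False], of "lam k" k]
      by (simp add: field_simps)
    show "((\<lambda>eps. outage K lam P M (Omega P M B) alpha beta eps k (mu eps k)) \<longlongrightarrow> 0) at_top"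
      if "k \<in> {1..K}" for k
      using that assms(1,7) by (intro outage_tendsto_zero) auto
    show "\<forall>\<^sub>F eps in at_top. coverage_prob K lam (Omega P M B) alpha eps \<noteq> 0"
      using eventually_gt_at_top[of 0] by eventually_elim (use coverage_prob_pos[OF False] in force)
    show "lam_u / Lambda K lam (Omega P M B) alpha \<noteq> 0"
      using Lambda_pos[OF False] lam_u_pos by simp
    show "(\<Sum>k\<in>{1..K}. lam k * Omega P M B k powr (2 / alpha) * (P k / eta + real (M k) * PC)) \<noteq> 0"
      using assms(1,4,6)
      by (intro tier_weighted_sum_pos[OF False, THEN less_imp_neq, symmetric] add_pos_nonneg) auto
  qed simp
qed

end
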